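(* Let $G$ be a graph with $\delta(G)\ge2$ and $b_{tR}(G)<\infty$. If $G$ has a unique $\gamma_{tR}(G)$-function, then $b_{tR}(G)=1$.
   Context: A TRDF on $G=(V,E)$ is a function $f:V\to\{0,1,2\}$ such that every $v$ with $f(v)=0$ has a neighbor $u$ with $f(u)=2$ and the subgraph induced by $\{v:f(v)>0\}$ has no isolated vertices; $\gamma_{tR}(G)$ is its minimum weight and a $\gamma_{tR}(G)$-function is a TRDF of that weight. $b_{tR}(G)$ is the minimum $|E'|$ such that $G-E'$ has no isolated vertices and $\gamma_{tR}(G-E')>\gamma_{tR}(G)$ ($\infty$ if none). $\delta(G)$ is the minimum degree. *)

theory Defs
  imports Main "HOL-Library.Extended_Nat"
begin

definition graph :: "'a set \<Rightarrow> 'a set set \<Rightarrow> bool" where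
  "graph V E \<longleftrightarrow> finite V \<and> (\<forall>e\<in>E. \<exists>u v. e = {u, v} \<and> u \<noteq> v \<and> u \<in> V \<and> v \<in> V)"

definition degree :: "'a set \<Rightarrow> 'a set set \<Rightarrow> 'a \<Rightarrow> nat" where
  "degree V E v = card {u \<in> V. {u, v} \<in> E}"

definition min_degree_ge :: "'a set \<Rightarrow> 'a set set \<Rightarrow> nat \<Rightarrow> bool" where
  "min_degree_ge V E k \<longleftrightarrow> (\<forall>v\<in>V. degree V E v \<ge> k)"

definition no_isolated :: "'a set \<Rightarrow> 'a set set \<Rightarrow> bool" where
  "no_isolated V E \<longleftrightarrow> (\<forall>v\<in>V. \<exists>u\<in>V. {u, v} \<in> E)"

text \<open>Total Roman dominating function; f is taken to be 0 outside V so that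
  functions are determined by their values on V.\<close>
definition TRDF :: "'a set \<Rightarrow> 'a set set \<Rightarrow> ('a \<Rightarrow> nat) \<Rightarrow> bool" where
  "TRDF V E f \<longleftrightarrow>
     (\<forall>v. v \<notin> V \<longrightarrow> f v = 0) \<and>
     (\<forall>v\<in>V. f v \<le> 2) \<and>
     (\<forall>v\<in>V. f v = 0 \<longrightarrow> (\<exists>u\<in>V. {u, v} \<in> E \<and> f u = 2)) \<and>
     (\<forall>v\<in>V. f v > 0 \<longrightarrow> (\<exists>u\<in>V. {u, v} \<in> E \<and> f u > 0))"

definition weight :: "'a set \<Rightarrow> ('a \<Rightarrow> nat) \<Rightarrow> nat" where
  "weight V f = (\<Sum>v\<in>V. f v)"

definition gamma_tR :: "'a set \<Rightarrow> 'a set set \<Rightarrow> nat" where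
  "gamma_tR V E = (LEAST w. \<exists>f. TRDF V E f \<and> weight V f = w)"

definition gamma_tR_function :: "'a set \<Rightarrow> 'a set set \<Rightarrow> ('a \<Rightarrow> nat) \<Rightarrow> bool" where
  "gamma_tR_function V E f \<longleftrightarrow> TRDF V E f \<and> weight V f = gamma_tR V E"

text \<open>Total Roman bondage number; infimum of the empty set of enat is \<infinity>.\<close>
definition b_tR :: "'a set \<Rightarrow> 'a set set \<Rightarrow> enat" where
  "b_tR V E = Inf {enat (card E') | E'. E' \<subseteq> E \<and> no_isolated V (E - E') \<and>
                      gamma_tR V (E - E') > gamma_tR V E}"

end

theory Submission
  imports Defs
begin

text \<open>Let \<open>f\<close> be the unique \<open>\<gamma>\<^sub>t\<^sub>R(G)\<close>-function. If \<open>f\<close> remained a TRDF of \<open>G - e\<close> for every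
  edge \<open>e\<close>, every vertex labelled 0 would have two neighbours labelled 2 and every vertex with a
  positive label two neighbours with positive labels. Then \<open>f\<close> could be modified without
  increasing its weight: a label 2 could be lowered to 1 (contradicting minimality), and if all
  labels are 1, the endpoints of an edge can be relabelled 2 and 0 (contradicting uniqueness).
  So \<open>f\<close> fails to be a TRDF of \<open>G - e\<close> for some edge \<open>e\<close>. Since \<open>\<delta>(G) \<ge> 2\<close>, \<open>G - e\<close> has no isolated
  vertices, and every \<open>\<gamma>\<^sub>t\<^sub>R(G - e)\<close>-function is a TRDF of \<open>G\<close> different from \<open>f\<close>, hence of weight
  larger than \<open>\<gamma>\<^sub>t\<^sub>R(G)\<close>.\<close>

lemma gamma_tR_le_weight:
  assumes "TRDF V E f"
  shows "gamma_tR V E \<le> weight V f"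
  unfolding gamma_tR_def by (rule Least_le) (use assms in blast)

lemma gamma_tR_function_exists:
  assumes "TRDF V E f"
  shows "\<exists>g. gamma_tR_function V E g"
  unfolding gamma_tR_function_def gamma_tR_def by (rule LeastI_ex) (use assms in blast)

lemma TRDF_edge_mono:
  assumes "TRDF V E' f" "E' \<subseteq> E"
  shows "TRDF V E f"
  using assms unfolding TRDF_def by blast

lemma TRDF_one_if_no_isolated:
  assumes "no_isolated V E"
  shows "TRDF V E (\<lambda>x. if x \<in> V then 1 else 0)"
  using assms unfolding TRDF_def no_isolated_def by auto

lemma weight_fun_upd:
  assumes "finite V" "v \<in> V"
  shows "weight V (f(v := k)) + f v = weight V f + k"
proof -
  have "sum (f(v := k)) (V - {v}) = sum f (V - {v})"
    by (rule sum.cong) auto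
  then show ?thesis
    unfolding weight_def using assms by (simp add: sum.remove)
qed

lemma graph_edgeE:
  assumes "graph V E" "e \<in> E"
  obtains u v where "e = {u, v}" "u \<noteq> v" "u \<in> V" "v \<in> V"
  using assms unfolding graph_def by blast

lemma graph_finite_edges:
  assumes "graph V E"
  shows "finite E"
proof -
  have "E \<subseteq> Pow V"
    using assms by (auto elim: graph_edgeE)
  then show ?thesis
    using assms unfolding graph_def by (meson finite_Pow_iff finite_subset)
qed

lemma TRDF_lower_two_if_edge_robust:
  assumes f: "TRDF V E f"
    and robust: "\<And>e. e \<in> E \<Longrightarrow> TRDF V (E - {e}) f"
    and v: "v \<in> V" "f v = 2"
  shows "TRDF V E (f(v := 1))"
  unfolding TRDF_def
proof (intro conjI ballI allI impI)
  fix x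
  assume "x \<notin> V"
  then show "(f(v := 1)) x = 0" using f v unfolding TRDF_def by auto
next
  fix x
  assume "x \<in> V"
  then show "(f(v := 1)) x \<le> 2" using f unfolding TRDF_def by auto
next
  fix w
  assume w: "w \<in> V" "(f(v := 1)) w = 0"
  then have "w \<noteq> v" "f w = 0" by (auto split: if_splits)
  then obtain u where u: "u \<in> V" "{u, w} \<in> E" "f u = 2"
    using f w unfolding TRDF_def by blast
  show "\<exists>x\<in>V. {x, w} \<in> E \<and> (f(v := 1)) x = 2"
  proof (cases "u = v")
    case False
    then show ?thesis using u by auto
  next
    case True
    from robust[OF u(2)] obtain x where "x \<in> V" "{x, w} \<in> E - {{u, w}}" "f x = 2"
      using w \<open>f w = 0\<close> unfolding TRDF_def by blast
    then show ?thesis using True by (intro bexI[of _ x]) auto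
  qed
next
  fix w
  assume w: "w \<in> V" "0 < (f(v := 1)) w"
  then have "0 < f w" using v by (auto split: if_splits)
  then obtain u where "u \<in> V" "{u, w} \<in> E" "0 < f u"
    using f w unfolding TRDF_def by blast
  then show "\<exists>u\<in>V. {u, w} \<in> E \<and> 0 < (f(v := 1)) u" by (intro bexI[of _ u]) auto
qed

lemma TRDF_swap_edge_if_edge_robust:
  assumes f: "TRDF V E f"
    and robust: "\<And>e. e \<in> E \<Longrightarrow> TRDF V (E - {e}) f"
    and one: "\<And>x. x \<in> V \<Longrightarrow> f x = 1"
    and uv: "{u, v} \<in> E" "u \<noteq> v" "u \<in> V" "v \<in> V"
  shows "TRDF V E (f(v := 2, u := 0))"
  unfolding TRDF_def
proof (intro conjI ballI allI impI)
  fix x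
  assume "x \<notin> V"
  then show "(f(v := 2, u := 0)) x = 0" using f uv unfolding TRDF_def by auto
next
  fix x
  assume "x \<in> V"
  then show "(f(v := 2, u := 0)) x \<le> 2" using one by auto
next
  fix w
  assume "w \<in> V" "(f(v := 2, u := 0)) w = 0"
  then have "w = u" using one by (auto split: if_splits)
  then show "\<exists>x\<in>V. {x, w} \<in> E \<and> (f(v := 2, u := 0)) x = 2"
    using uv by (intro bexI[of _ v]) (auto simp: insert_commute)
next
  fix w
  assume w: "w \<in> V" "0 < (f(v := 2, u := 0)) w"
  then have "w \<noteq> u" by auto
  obtain x where x: "x \<in> V" "{x, w} \<in> E"
    using f w one unfolding TRDF_def by (metis zero_less_one)
  show "\<exists>x\<in>V. {x, w} \<in> E \<and> 0 < (f(v := 2, u := 0)) x"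
  proof (cases "x = u")
    case False
    then show ?thesis using x one by (intro bexI[of _ x]) auto
  next
    case True
    from robust[OF x(2)] obtain y where "y \<in> V" "{y, w} \<in> E - {{x, w}}"
      using w one unfolding TRDF_def by (metis zero_less_one)
    then show ?thesis using True one by (intro bexI[of _ y]) auto
  qed
qed

lemma gamma_tR_function_edge_robust_eq_1:
  assumes fin: "finite V"
    and f: "gamma_tR_function V E f"
    and robust: "\<And>e. e \<in> E \<Longrightarrow> TRDF V (E - {e}) f"
    and x: "x \<in> V"
  shows "f x = 1"
proof -
  have T: "TRDF V E f" and W: "weight V f = gamma_tR V E"
    using f unfolding gamma_tR_function_def by auto
  have no_two: "f v \<noteq> 2" if v: "v \<in> V" for v
  proof
    assume "f v = 2"
    with T robust v have "TRDF V E (f(v := 1))"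
      by (rule TRDF_lower_two_if_edge_robust)
    then have "gamma_tR V E \<le> weight V (f(v := 1))"
      by (rule gamma_tR_le_weight)
    moreover have "weight V (f(v := 1)) + 2 = weight V f + 1"
      using weight_fun_upd[OF fin v, of f 1] \<open>f v = 2\<close> by simp
    ultimately show False using W by linarith
  qed
  have "f x \<noteq> 0"
    using T x no_two unfolding TRDF_def by blast
  moreover have "f x \<le> 2"
    using T x unfolding TRDF_def by blast
  ultimately show ?thesis using no_two[OF x] by linarith
qed

lemma unique_gamma_tR_function_not_edge_robust:
  assumes G: "graph V E" and "E \<noteq> {}"
    and f: "gamma_tR_function V E f"
    and uniq: "\<And>g. gamma_tR_function V E g \<Longrightarrow> g = f"
  shows "\<exists>e\<in>E. \<not> TRDF V (E - {e}) f"
proof (rule ccontr)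
  assume "\<not> ?thesis"
  then have robust: "\<And>e. e \<in> E \<Longrightarrow> TRDF V (E - {e}) f" by blast
  have fin: "finite V" using G unfolding graph_def by blast
  have one: "\<And>x. x \<in> V \<Longrightarrow> f x = 1"
    using gamma_tR_function_edge_robust_eq_1[OF fin f robust] .
  from \<open>E \<noteq> {}\<close> obtain e where "e \<in> E" by blast
  with G obtain u v where "e = {u, v}" "u \<noteq> v" "u \<in> V" "v \<in> V"
    by (rule graph_edgeE)
  with \<open>e \<in> E\<close> have uv: "{u, v} \<in> E" "u \<noteq> v" "u \<in> V" "v \<in> V" by simp_all
  let ?g = "f(v := 2, u := 0)"
  have "weight V ?g + f u = weight V (f(v := 2))"
    using weight_fun_upd[OF fin uv(3), of "f(v := 2)"] uv(2) by simp
  moreover have "weight V (f(v := 2)) + f v = weight V f + 2"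
    by (rule weight_fun_upd[OF fin uv(4)])
  ultimately have "weight V ?g = weight V f"
    using one uv(3,4) by simp
  moreover have "TRDF V E f"
    using f unfolding gamma_tR_function_def by blast
  ultimately have "gamma_tR_function V E ?g"
    using TRDF_swap_edge_if_edge_robust[OF _ robust one uv] f
    unfolding gamma_tR_function_def by simp
  moreover have "?g \<noteq> f"
    using one[OF uv(3)] by (metis fun_upd_same zero_neq_one)
  ultimately show False using uniq by blast
qed

lemma no_isolated_minus_edge:
  assumes "graph V E" "min_degree_ge V E 2"
  shows "no_isolated V (E - {e})"
  unfolding no_isolated_def
proof
  fix v
  assume "v \<in> V"
  then have "2 \<le> card {u \<in> V. {u, v} \<in> E}"
    using assms(2) unfolding min_degree_ge_def degree_def by blast
  then obtain a b where "a \<in> V" "{a, v} \<in> E" "b \<in> V" "{b, v} \<in> E" "a \<noteq> b"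
    by (auto simp: numeral_2_eq_2 card_le_Suc_iff)
  then show "\<exists>u\<in>V. {u, v} \<in> E - {e}"
    by (metis Diff_iff doubleton_eq_iff singletonD)
qed

lemma gamma_tR_minus_edge_gt_if_unique:
  assumes "no_isolated V (E - {e})" "\<not> TRDF V (E - {e}) f"
    and uniq: "\<And>g. gamma_tR_function V E g \<Longrightarrow> g = f"
  shows "gamma_tR V E < gamma_tR V (E - {e})"
proof -
  obtain h where h: "gamma_tR_function V (E - {e}) h"
    using gamma_tR_function_exists TRDF_one_if_no_isolated assms(1) by blast
  then have hE: "TRDF V E h" "weight V h = gamma_tR V (E - {e})"
    unfolding gamma_tR_function_def using TRDF_edge_mono by blast+
  then have "gamma_tR V E \<le> gamma_tR V (E - {e})"
    using gamma_tR_le_weight by metis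
  moreover have "h \<noteq> f"
    using h assms(2) unfolding gamma_tR_function_def by blast
  then have "gamma_tR V E \<noteq> gamma_tR V (E - {e})"
    using uniq hE unfolding gamma_tR_function_def by metis
  ultimately show ?thesis by simp
qed

lemma b_tR_no_edges: "b_tR V {} = \<infinity>"
  unfolding b_tR_def by (simp add: top_enat_def[symmetric])

lemma b_tR_eq_1I:
  assumes "graph V E" "e \<in> E" "no_isolated V (E - {e})"
    and "gamma_tR V E < gamma_tR V (E - {e})"
  shows "b_tR V E = 1"
  unfolding b_tR_def
proof (rule antisym)
  show "Inf {enat (card E') | E'. E' \<subseteq> E \<and> no_isolated V (E - E') \<and>
      gamma_tR V (E - E') > gamma_tR V E} \<le> 1"
    using assms(2-) by (intro Inf_lower CollectI exI[of _ "{e}"]) (simp add: one_enat_def)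
  have "1 \<le> card E'" if "E' \<subseteq> E" "gamma_tR V (E - E') > gamma_tR V E" for E'
    using that graph_finite_edges[OF assms(1)]
    by (metis Diff_empty One_nat_def Suc_leI card_gt_0_iff less_irrefl finite_subset)
  then show "1 \<le> Inf {enat (card E') | E'. E' \<subseteq> E \<and> no_isolated V (E - E') \<and>
      gamma_tR V (E - E') > gamma_tR V E}"
    by (intro Inf_greatest) (auto simp: one_enat_def)
qed

theorem mainTheorem14:
  fixes V :: "'a set" and E :: "'a set set"
  assumes "graph V E"
    and "min_degree_ge V E 2"
    and "b_tR V E < \<infinity>"
    and "\<exists>!f. gamma_tR_function V E f"
  shows "b_tR V E = 1"
proof -
  obtain f where f: "gamma_tR_function V E f"
    and uniq: "\<And>g. gamma_tR_function V E g \<Longrightarrow> g = f"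
    using assms(4) by blast
  have "E \<noteq> {}"
    using assms(3) b_tR_no_edges by (metis less_irrefl)
  then obtain e where e: "e \<in> E" "\<not> TRDF V (E - {e}) f"
    using unique_gamma_tR_function_not_edge_robust[OF assms(1) _ f uniq] by blast
  have "no_isolated V (E - {e})"
    using no_isolated_minus_edge[OF assms(1,2)] .
  then show ?thesis
    using b_tR_eq_1I[OF assms(1) e(1)] gamma_tR_minus_edge_gt_if_unique[OF _ e(2) uniq] by blast
qed

end
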